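(* Let $M$ be a weight sequence of moderate growth such that $\liminf_{k\to\infty}m_k^{1/k}>0$ and $\liminf_{k\to\infty}\mu_{Qk}/\mu_k>1$ for some $Q\in\mathbb{N}_{\ge2}$. Then $\mathcal{B}^{\{M\}}(\mathbb{R}^n)=\mathcal{B}^{\{\omega_M\}}(\mathbb{R}^n)$ and $\mathcal{B}^{\{M\}}(E)=\mathcal{B}^{\{\omega_M\}}(E)$ for every compact $E\subseteq\mathbb{R}^n$.
   Context: A weight sequence is given by an increasing sequence $1=\mu_0\le\mu_1\le\cdots$ via $M_k=\mu_0\cdots\mu_k=k!\,m_k$, with $M_k^{1/k}\to\infty$; it has moderate growth if $M_{j+k}\le C^{j+k}M_jM_k$ for some $C$ and all $j,k$. $\omega_M(t)=\sup_k\log(t^k/M_k)$; under the hypotheses $\omega_M$ is a weight function (continuous increasing, $\omega(0)=0$, $\omega\to\infty$, $\omega(2t)=O(\omega(t))$, $\omega(t)=O(t)$, $\log t=o(\omega(t))$, $\omega(e^t)$ convex). For a weight function $\omega$ (normalized $\omega|_{[0,1]}=0$), $\varphi^*(t)=\sup_{s\ge0}(st-\omega(e^s))$ and $W^x_k=\exp(\frac1x\varphi^*(xk))$. $\mathcal{B}^{\{M\}}(\mathbb{R}^n)$: smooth $f$ with $\sup_{x,\alpha}|\partial^\alpha f(x)|/(\rho^{|\alpha|}M_{|\alpha|})<\infty$ for some $\rho>0$. $\mathcal{B}^{\{\omega\}}(\mathbb{R}^n)$: smooth $f$ with $\sup_{x,\alpha}|\partial^\alpha f(x)|\exp(-\frac1\rho\varphi^*(\rho|\alpha|))<\infty$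 for some $\rho\in\mathbb{N}$. For compact $E$, $\mathcal{B}^{\{M\}}(E)$ consists of jets $F=(F^\alpha)$, $F^\alpha\in C^0(E)$, with $C,\rho>0$ such that $|F^\alpha(a)|\le C\rho^{|\alpha|}M_{|\alpha|}$ and $|(R^p_aF)^\alpha(b)|\le C\rho^{p+1}M_{p+1}\frac{|b-a|^{p+1-|\alpha|}}{(p+1-|\alpha|)!}$ for all $\alpha$, $p\ge|\alpha|$, $a,b\in E$, where $(R^p_aF)^\alpha(b)=F^\alpha(b)-\sum_{|\beta|\le p-|\alpha|}\frac{(b-a)^\beta}{\beta!}F^{\alpha+\beta}(a)$; and $\mathcal{B}^{\{\omega\}}(E)=\bigcup_{x>0}\mathcal{B}^{\{W^x\}}(E)$. *)

theory Defs
  imports "HOL-Analysis.Analysis"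
begin

definition Mseq :: "(nat \<Rightarrow> real) \<Rightarrow> nat \<Rightarrow> real" where
  "Mseq mu k = (\<Prod>j\<in>{0..k}. mu j)"

definition mseq :: "(nat \<Rightarrow> real) \<Rightarrow> nat \<Rightarrow> real" where
  "mseq mu k = Mseq mu k / fact k"

definition weight_sequence :: "(nat \<Rightarrow> real) \<Rightarrow> bool" where
  "weight_sequence mu \<longleftrightarrow> mu 0 = 1 \<and> mono mu \<and>
     filterlim (\<lambda>k. root k (Mseq mu k)) at_top sequentially"

definition moderate_growth :: "(nat \<Rightarrow> real) \<Rightarrow> bool" where
  "moderate_growth mu \<longleftrightarrow>
     (\<exists>C. \<forall>j k. Mseq mu (j + k) \<le> C ^ (j + k) * Mseq mu j * Mseq mu k)"

definition omegaM :: "(nat \<Rightarrow> real) \<Rightarrow> real \<Rightarrow> real" where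
  "omegaM mu t = (if t \<le> 0 then 0 else (SUP k. ln (t ^ k / Mseq mu k)))"

definition phistar :: "(real \<Rightarrow> real) \<Rightarrow> real \<Rightarrow> real" where
  "phistar \<omega> t = (SUP s\<in>{0..}. s * t - \<omega> (exp s))"

definition Wseq :: "(real \<Rightarrow> real) \<Rightarrow> real \<Rightarrow> nat \<Rightarrow> real" where
  "Wseq \<omega> x k = exp (phistar \<omega> (x * real k) / x)"

type_synonym 'n mindex = "'n \<Rightarrow> nat"

definition mlen :: "'n::finite mindex \<Rightarrow> nat" where
  "mlen \<alpha> = (\<Sum>i\<in>UNIV. \<alpha> i)"

definition mfact :: "'n::finite mindex \<Rightarrow> real" where
  "mfact \<alpha> = (\<Prod>i\<in>UNIV. fact (\<alpha> i))"

definition mpow :: "real ^ 'n::finite \<Rightarrow> 'n mindex \<Rightarrow> real" where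
  "mpow v \<beta> = (\<Prod>i\<in>UNIV. (v $ i) ^ (\<beta> i))"

definition dpart :: "'n::finite \<Rightarrow> (real ^ 'n \<Rightarrow> real) \<Rightarrow> real ^ 'n \<Rightarrow> real" where
  "dpart i f x = deriv (\<lambda>t. f (x + t *\<^sub>R axis i 1)) 0"

text \<open>Iterated partial derivative for a multi-index (coordinates processed in a fixed
  enumeration; for smooth functions the order is irrelevant).\<close>

definition dmulti :: "'n::finite mindex \<Rightarrow> (real ^ 'n \<Rightarrow> real) \<Rightarrow> real ^ 'n \<Rightarrow> real" where
  "dmulti \<alpha> f = foldr (\<lambda>i. dpart i ^^ \<alpha> i) (SOME xs. distinct xs \<and> set xs = UNIV) f"

definition smooth :: "(real ^ 'n::finite \<Rightarrow> real) \<Rightarrow> bool" where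
  "smooth f \<longleftrightarrow> (\<forall>is x. foldr dpart is f differentiable (at x))"

definition BM_Rn :: "(nat \<Rightarrow> real) \<Rightarrow> (real ^ 'n::finite \<Rightarrow> real) set" where
  "BM_Rn M = {f. smooth f \<and> (\<exists>\<rho>>0. \<exists>C. \<forall>x \<alpha>.
       \<bar>dmulti \<alpha> f x\<bar> \<le> C * \<rho> ^ mlen \<alpha> * M (mlen \<alpha>))}"

definition Bomega_Rn :: "(real \<Rightarrow> real) \<Rightarrow> (real ^ 'n::finite \<Rightarrow> real) set" where
  "Bomega_Rn \<omega> = {f. smooth f \<and> (\<exists>\<rho>::nat. \<rho> > 0 \<and> (\<exists>C. \<forall>x \<alpha>.
       \<bar>dmulti \<alpha> f x\<bar> \<le> C * exp (phistar \<omega> (real \<rho> * real (mlen \<alpha>)) / real \<rho>)))}"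

definition madd :: "'n mindex \<Rightarrow> 'n mindex \<Rightarrow> 'n mindex" where
  "madd \<alpha> \<beta> = (\<lambda>i. \<alpha> i + \<beta> i)"

definition jet_rem ::
  "('n::finite mindex \<Rightarrow> real ^ 'n \<Rightarrow> real) \<Rightarrow> nat \<Rightarrow> real ^ 'n \<Rightarrow> 'n mindex \<Rightarrow> real ^ 'n \<Rightarrow> real" where
  "jet_rem F p a \<alpha> b = F \<alpha> b -
     (\<Sum>\<beta>\<in>{\<beta>. mlen \<beta> \<le> p - mlen \<alpha>}. mpow (b - a) \<beta> / mfact \<beta> * F (madd \<alpha> \<beta>) a)"

definition BM_E :: "(nat \<Rightarrow> real) \<Rightarrow> (real ^ 'n::finite) set
                     \<Rightarrow> ('n mindex \<Rightarrow> real ^ 'n \<Rightarrow> real) set" where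
  "BM_E M E = {F. (\<forall>\<alpha>. continuous_on E (F \<alpha>)) \<and>
     (\<exists>C>0. \<exists>\<rho>>0.
        (\<forall>\<alpha>. \<forall>a\<in>E. \<bar>F \<alpha> a\<bar> \<le> C * \<rho> ^ mlen \<alpha> * M (mlen \<alpha>)) \<and>
        (\<forall>\<alpha> p. \<forall>a\<in>E. \<forall>b\<in>E. p \<ge> mlen \<alpha> \<longrightarrow>
           \<bar>jet_rem F p a \<alpha> b\<bar> \<le> C * \<rho> ^ (p + 1) * M (p + 1)
              * norm (b - a) ^ (p + 1 - mlen \<alpha>) / fact (p + 1 - mlen \<alpha>)))}"

definition Bomega_E :: "(real \<Rightarrow> real) \<Rightarrow> (real ^ 'n::finite) set
                     \<Rightarrow> ('n mindex \<Rightarrow> real ^ 'n \<Rightarrow> real) set" where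
  "Bomega_E \<omega> E = (\<Union>x\<in>{0<..}. BM_E (Wseq \<omega> x) E)"

end

theory Submission
  imports Defs
begin

text \<open>
  Since mu is increasing, M is log-convex, so omega_M and k \<mapsto> log M_k are Legendre dual:
  phi*(n) = log M_n for integers n. Consequently W^1 = M, (W^r_k)^r = M_(rk) for integers r,
  and W^x increases with x. Moderate growth gives M_(rk) \<le> C^(r^2 k) M_k^r, hence
  W^x_k \<le> h^k M_k for every x. Conversely, mu_(Qk) \<ge> \<delta> mu_k for large k, together with
  the subexponential growth of mu forced by moderate growth, yields
  M_(Qn) \<ge> c \<eta>^(Qn) M_n^Q with \<eta> > 1; iterating this j times with \<eta>^j > \<rho> gives
  \<rho>^k M_k \<le> D W^r_k for r = Q^j. So the weights \<rho>^k M_k (\<rho> > 0) and W^x (x > 0) dominate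
  each other, which gives the equality of the global classes. For the Whitney-jet
  classes the first direction alone suffices, because M = W^1 is one of the W^x.
\<close>

section \<open>Increasing weight sequences\<close>

lemma Mseq_Suc: "Mseq mu (Suc k) = Mseq mu k * mu (Suc k)"
  by (simp add: Mseq_def prod.atLeast0_atMost_Suc)

locale increasing_weights =
  fixes mu :: "nat \<Rightarrow> real"
  assumes mu_0: "mu 0 = 1" and mono_mu: "mono mu"
begin

lemma mu_ge_1: "mu k \<ge> 1"
  using monoD[OF mono_mu, of 0 k] mu_0 by simp

lemma mu_pos: "mu k > 0"
  using mu_ge_1[of k] by simp

lemma Mseq_ge_1: "Mseq mu k \<ge> 1"
  unfolding Mseq_def by (rule prod_ge_1) (use mu_ge_1 in auto)

lemma Mseq_pos: "Mseq mu k > 0"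
  using Mseq_ge_1[of k] by simp

lemma Mseq_0 [simp]: "Mseq mu 0 = 1"
  by (simp add: Mseq_def mu_0)

lemma Mseq_add_ge_power: "Mseq mu n * mu n ^ t \<le> Mseq mu (n + t)"
proof (induction t)
  case (Suc t)
  have "Mseq mu n * mu n ^ t * mu n \<le> Mseq mu (n + t) * mu (Suc (n + t))"
    using Suc Mseq_pos[of n] Mseq_pos[of "n + t"] mu_ge_1[of n] monoD[OF mono_mu, of n "Suc (n + t)"]
    by (intro mult_mono) auto
  then show ?case by (simp add: Mseq_Suc algebra_simps)
qed simp

lemma Mseq_add_le_power: "Mseq mu (n + t) \<le> Mseq mu n * mu (n + t) ^ t"
proof (induction t)
  case (Suc t)
  have "Mseq mu (Suc (n + t)) \<le> Mseq mu n * mu (n + t) ^ t * mu (Suc (n + t))"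
    using Suc mu_ge_1[of "Suc (n + t)"] by (simp add: Mseq_Suc)
  also have "\<dots> \<le> Mseq mu n * mu (Suc (n + t)) ^ t * mu (Suc (n + t))"
    using Mseq_pos[of n] less_imp_le[OF mu_pos] monoD[OF mono_mu, of "n + t" "Suc (n + t)"]
    by (intro mult_right_mono mult_left_mono power_mono) auto
  finally show ?case by (simp add: algebra_simps)
qed simp

lemma Mseq_le_mu_power: "Mseq mu k \<le> mu k ^ k"
  using Mseq_add_le_power[of 0 k] by simp

text \<open>This is the log-convexity of M that makes omega_M and M Legendre dual.\<close>

lemma mu_power_div_Mseq_le: "mu n ^ k / Mseq mu k \<le> mu n ^ n / Mseq mu n"
proof (cases "n \<le> k")
  case True
  then obtain t where k: "k = n + t" using le_Suc_ex by blast
  have "mu n ^ k * Mseq mu n = mu n ^ n * (Mseq mu n * mu n ^ t)"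
    by (simp add: k power_add algebra_simps)
  also have "\<dots> \<le> mu n ^ n * Mseq mu k"
    using Mseq_add_ge_power[of n t] mu_pos[of n] by (simp add: k)
  finally show ?thesis using Mseq_pos by (simp add: divide_simps)
next
  case False
  then obtain t where n: "n = k + t" by (metis le_Suc_ex nat_le_linear)
  have "mu n ^ k * Mseq mu n \<le> mu n ^ k * (Mseq mu k * mu n ^ t)"
    using Mseq_add_le_power[of k t] mu_pos[of n] by (simp add: n)
  also have "\<dots> = mu n ^ n * Mseq mu k"
    by (simp add: n power_add algebra_simps)
  finally show ?thesis using Mseq_pos by (simp add: divide_simps)
qed

lemma liminf_mu_ratio_gt_1E:
  assumes "liminf (\<lambda>k. ereal (mu (Q * k) / mu k)) > 1"
  obtains \<delta> k0 where "\<delta> > 1" "k0 \<ge> 1" "\<And>k. k \<ge> k0 \<Longrightarrow> \<delta> * mu k \<le> mu (Q * k)"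
proof -
  obtain \<delta> where \<delta>: "1 < ereal \<delta>" "ereal \<delta> < liminf (\<lambda>k. ereal (mu (Q * k) / mu k))"
    using ereal_dense2[OF assms] by blast
  have "eventually (\<lambda>k. ereal \<delta> < ereal (mu (Q * k) / mu k)) sequentially"
    by (rule less_LiminfD[OF \<delta>(2)])
  then obtain k1 where k1: "\<And>k. k \<ge> k1 \<Longrightarrow> \<delta> < mu (Q * k) / mu k"
    by (auto simp: eventually_sequentially)
  have "\<delta> * mu k \<le> mu (Q * k)" if "k \<ge> max 1 k1" for k
    using k1[of k] that mu_pos[of k] by (simp add: less_divide_eq)
  then show ?thesis using \<delta>(1) that[of \<delta> "max 1 k1"] by simp
qed

lemma Mseq_le_prod_mu_mult:
  assumes Q: "Q \<ge> 1" and \<delta>: "\<delta> \<ge> 1" and k0: "k0 \<ge> 1"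
    and ratio: "\<And>k. k \<ge> k0 \<Longrightarrow> \<delta> * mu k \<le> mu (Q * k)"
  shows "\<delta> ^ (k + 1) * Mseq mu k \<le> \<delta> ^ k0 * (\<Prod>j\<in>{0..k}. mu (Q * j))"
proof (induction k)
  case 0
  have "\<delta> ^ 1 \<le> \<delta> ^ k0" using \<delta> k0 by (intro power_increasing) auto
  then show ?case by (simp add: mu_0)
next
  case (Suc k)
  have prod_nonneg: "0 \<le> (\<Prod>j\<in>{0..k}. mu (Q * j))"
    by (intro prod_nonneg) (simp add: less_imp_le[OF mu_pos])
  show ?case
  proof (cases "Suc k \<ge> k0")
    case True
    have "\<delta> ^ (Suc k + 1) * Mseq mu (Suc k) = (\<delta> ^ (k + 1) * Mseq mu k) * (\<delta> * mu (Suc k))"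
      by (simp add: Mseq_Suc algebra_simps)
    also have "\<dots> \<le> (\<delta> ^ k0 * (\<Prod>j\<in>{0..k}. mu (Q * j))) * mu (Q * Suc k)"
      using prod_nonneg \<delta> mu_pos[of "Suc k"] by (intro mult_mono[OF Suc.IH ratio[OF True]]) auto
    also have "\<dots> = \<delta> ^ k0 * (\<Prod>j\<in>{0..Suc k}. mu (Q * j))"
      by (simp add: prod.atLeast0_atMost_Suc algebra_simps)
    finally show ?thesis .
  next
    case False
    have "Mseq mu (Suc k) \<le> (\<Prod>j\<in>{0..Suc k}. mu (Q * j))"
      unfolding Mseq_def using Q mu_pos mono_mu
      by (intro prod_mono) (auto simp: less_imp_le monoD)
    moreover have "\<delta> ^ (Suc k + 1) \<le> \<delta> ^ k0" using False \<delta> by (intro power_increasing) auto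
    ultimately show ?thesis
      using \<delta> Mseq_pos[of "Suc k"] by (intro mult_mono) auto
  qed
qed

lemma prod_mu_mult_power_le_Mseq: "(\<Prod>j\<in>{0..k}. mu (Q * j)) ^ Q \<le> Mseq mu (Q * (k + 1))"
proof (induction k)
  case 0
  then show ?case using Mseq_ge_1[of Q] by (simp add: mu_0)
next
  case (Suc k)
  have "(\<Prod>j\<in>{0..Suc k}. mu (Q * j)) ^ Q = (\<Prod>j\<in>{0..k}. mu (Q * j)) ^ Q * mu (Q * (k + 1)) ^ Q"
    by (simp add: prod.atLeast0_atMost_Suc power_mult_distrib)
  also have "\<dots> \<le> Mseq mu (Q * (k + 1)) * mu (Q * (k + 1)) ^ Q"
    using Suc mu_pos[of "Q * (k + 1)"] by (intro mult_right_mono) auto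
  also have "\<dots> \<le> Mseq mu (Q * (k + 1) + Q)" by (rule Mseq_add_ge_power)
  finally show ?case by (simp add: algebra_simps)
qed

lemma Mseq_power_le_Mseq_mult:
  assumes "Q \<ge> 1" and \<delta>: "\<delta> \<ge> 1" and "k0 \<ge> 1"
    and "\<And>k. k \<ge> k0 \<Longrightarrow> \<delta> * mu k \<le> mu (Q * k)"
  shows "\<delta> ^ (Q * (k + 1)) * Mseq mu k ^ Q \<le> \<delta> ^ (Q * k0) * Mseq mu (Q * (k + 1))"
proof -
  have "\<delta> ^ (Q * (k + 1)) = (\<delta> ^ (k + 1)) ^ Q"
    unfolding power_mult[symmetric] by (simp add: mult.commute)
  then have "\<delta> ^ (Q * (k + 1)) * Mseq mu k ^ Q = (\<delta> ^ (k + 1) * Mseq mu k) ^ Q"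
    by (simp add: power_mult_distrib)
  also have "\<dots> \<le> (\<delta> ^ k0 * (\<Prod>j\<in>{0..k}. mu (Q * j))) ^ Q"
    using Mseq_le_prod_mu_mult[OF assms] Mseq_pos[of k] \<delta> by (intro power_mono) auto
  also have "\<dots> = \<delta> ^ (Q * k0) * (\<Prod>j\<in>{0..k}. mu (Q * j)) ^ Q"
    by (simp only: power_mult_distrib power_mult[symmetric] mult.commute[of k0 Q])
  also have "\<dots> \<le> \<delta> ^ (Q * k0) * Mseq mu (Q * (k + 1))"
    using prod_mu_mult_power_le_Mseq \<delta> by (intro mult_left_mono) auto
  finally show ?thesis .
qed

end

section \<open>The weight function omega_M and its Young conjugate\<close>

locale weight_seq = increasing_weights +
  assumes root_Mseq_at_top: "filterlim (\<lambda>k. root k (Mseq mu k)) at_top sequentially"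

lemma weight_seqI: "weight_sequence mu \<Longrightarrow> weight_seq mu"
  by unfold_locales (auto simp: weight_sequence_def)

context weight_seq
begin

lemma bdd_above_omegaM_terms:
  assumes t: "t > 0"
  shows "bdd_above (range (\<lambda>k. ln (t ^ k / Mseq mu k)))"
proof -
  have "eventually (\<lambda>k. t \<le> root k (Mseq mu k)) sequentially"
    using root_Mseq_at_top unfolding filterlim_at_top by blast
  then have "eventually (\<lambda>k. norm (t ^ k / Mseq mu k) \<le> norm (1::real)) sequentially"
  proof (rule eventually_mono[OF eventually_conj[OF _ eventually_gt_at_top[of 0]]])
    fix k assume k: "t \<le> root k (Mseq mu k) \<and> k > 0"
    have "t ^ k \<le> root k (Mseq mu k) ^ k" using k t by (intro power_mono) auto
    then show "norm (t ^ k / Mseq mu k) \<le> norm (1::real)"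
      using k t Mseq_pos[of k] by simp
  qed
  then have "Bseq (\<lambda>k. t ^ k / Mseq mu k)"
    by (rule Bseq_eventually_mono) simp
  then obtain K where "\<forall>k. norm (t ^ k / Mseq mu k) \<le> K"
    by (rule BseqE)
  then have "ln (t ^ k / Mseq mu k) \<le> ln K" for k
    using t Mseq_pos[of k] by (intro ln_mono) (auto simp: abs_of_pos[OF Mseq_pos])
  then show ?thesis by (rule bdd_aboveI2)
qed

lemma omegaM_ge: "t > 0 \<Longrightarrow> ln (t ^ k / Mseq mu k) \<le> omegaM mu t"
  unfolding omegaM_def by (auto intro: cSUP_upper bdd_above_omegaM_terms)

lemma omegaM_le: "t > 0 \<Longrightarrow> (\<And>k. ln (t ^ k / Mseq mu k) \<le> X) \<Longrightarrow> omegaM mu t \<le> X"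
  unfolding omegaM_def by (auto intro: cSUP_least)

lemma omegaM_nonneg: "omegaM mu t \<ge> 0"
  using omegaM_ge[of t 0] by (cases "t > 0") (auto simp: omegaM_def)

lemma omegaM_exp_ge: "s * real k - ln (Mseq mu k) \<le> omegaM mu (exp s)"
  using omegaM_ge[of "exp s" k] Mseq_pos[of k]
  by (simp add: ln_div ln_realpow exp_of_nat_mult[symmetric] mult.commute)

lemma omegaM_mu: "omegaM mu (mu n) = ln (mu n ^ n / Mseq mu n)"
  using omegaM_ge[of "mu n" n] mu_pos[of n] Mseq_pos
  by (intro antisym omegaM_le) (auto simp: mu_power_div_Mseq_le)

lemma phistar_omegaM_nat: "phistar (omegaM mu) (real n) = ln (Mseq mu n)"
proof (rule antisym)
  have upper: "s * real n - omegaM mu (exp s) \<le> ln (Mseq mu n)" for s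
    using omegaM_exp_ge[of s n] by simp
  then show "phistar (omegaM mu) (real n) \<le> ln (Mseq mu n)"
    unfolding phistar_def by (auto intro: cSUP_least)
  have "ln (Mseq mu n) = ln (mu n) * real n - omegaM mu (exp (ln (mu n)))"
    using mu_pos[of n] Mseq_pos[of n] by (simp add: omegaM_mu ln_div ln_realpow)
  also have "\<dots> \<le> phistar (omegaM mu) (real n)"
    unfolding phistar_def using mu_ge_1[of n] upper
    by (intro cSUP_upper bdd_aboveI2) auto
  finally show "ln (Mseq mu n) \<le> phistar (omegaM mu) (real n)" .
qed

lemma phistar_omegaM_le:
  assumes x: "x > 0" "x \<le> real r"
  shows "phistar (omegaM mu) (x * real k) / x \<le> ln (Mseq mu (r * k)) / real r"
proof -
  have "phistar (omegaM mu) (x * real k) \<le> x * (ln (Mseq mu (r * k)) / real r)"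
    unfolding phistar_def
  proof (rule cSUP_least)
    fix s :: real
    have "x * (s * real (r * k) - ln (Mseq mu (r * k))) \<le> x * omegaM mu (exp s)"
      using omegaM_exp_ge[of s "r * k"] x by simp
    also have "\<dots> \<le> real r * omegaM mu (exp s)"
      using omegaM_nonneg x by (intro mult_right_mono) auto
    finally show "s * (x * real k) - omegaM mu (exp s) \<le> x * (ln (Mseq mu (r * k)) / real r)"
      using x by (simp add: field_simps)
  qed simp
  then show ?thesis using x by (simp add: divide_le_eq mult.commute)
qed

lemma phistar_omegaM_nat_mult: "phistar (omegaM mu) (real r * real k) = ln (Mseq mu (r * k))"
  using phistar_omegaM_nat[of "r * k"] by simp

lemma Wseq_omegaM_nat_power:
  assumes "r > 0"
  shows "Wseq (omegaM mu) (real r) k ^ r = Mseq mu (r * k)"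
proof -
  have "Wseq (omegaM mu) (real r) k ^ r = exp (real r * (ln (Mseq mu (r * k)) / real r))"
    by (simp only: Wseq_def phistar_omegaM_nat_mult exp_of_nat_mult)
  also have "\<dots> = Mseq mu (r * k)"
    using assms Mseq_pos[of "r * k"] by simp
  finally show ?thesis .
qed

lemma Wseq_omegaM_one: "Wseq (omegaM mu) 1 = Mseq mu"
  using Wseq_omegaM_nat_power[of 1] by fastforce

lemma Wseq_omegaM_le:
  "x > 0 \<Longrightarrow> x \<le> real r \<Longrightarrow> Wseq (omegaM mu) x k \<le> Wseq (omegaM mu) (real r) k"
  unfolding Wseq_def phistar_omegaM_nat_mult exp_le_cancel_iff by (rule phistar_omegaM_le)

end

section \<open>Moderate growth and the condition on mu_(Qk) / mu_k\<close>

lemma power_growth_iterate: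
  fixes M :: "nat \<Rightarrow> real"
  assumes pos: "\<And>n. M n > 0" and \<eta>: "\<eta> > 0" and c: "c > 0"
    and step: "\<And>n. c * \<eta> ^ (Q * n) * M n ^ Q \<le> M (Q * n)"
  shows "\<exists>c'>0. \<forall>n. c' * (\<eta> ^ j) ^ (Q ^ j * n) * M n ^ Q ^ j \<le> M (Q ^ j * n)"
proof (induction j)
  case 0
  then show ?case by (intro exI[of _ 1]) simp
next
  case (Suc j)
  then obtain c' where c': "c' > 0" "\<And>n. c' * (\<eta> ^ j) ^ (Q ^ j * n) * M n ^ Q ^ j \<le> M (Q ^ j * n)"
    by blast
  have "c * c' ^ Q * (\<eta> ^ Suc j) ^ (Q ^ Suc j * n) * M n ^ Q ^ Suc j \<le> M (Q ^ Suc j * n)" for n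
  proof -
    have "c * c' ^ Q * (\<eta> ^ Suc j) ^ (Q ^ Suc j * n) * M n ^ Q ^ Suc j
        = c * \<eta> ^ (Q * (Q ^ j * n)) * (c' * (\<eta> ^ j) ^ (Q ^ j * n) * M n ^ Q ^ j) ^ Q"
      by (simp add: power_mult_distrib power_mult[symmetric] power_add mult_ac)
    also have "\<dots> \<le> c * \<eta> ^ (Q * (Q ^ j * n)) * M (Q ^ j * n) ^ Q"
      using c'(1) pos[of n] \<eta> c by (intro mult_left_mono power_mono c'(2)) auto
    also have "\<dots> \<le> M (Q * (Q ^ j * n))" by (rule step)
    finally show ?thesis by (simp add: mult.assoc)
  qed
  then show ?case using c' c by (intro exI[of _ "c * c' ^ Q"]) auto
qed

locale moderate_weights = increasing_weights +
  fixes C :: real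
  assumes C_ge_1: "C \<ge> 1"
    and Mseq_add_le: "Mseq mu (j + k) \<le> C ^ (j + k) * Mseq mu j * Mseq mu k"

lemma moderate_weightsE:
  assumes "increasing_weights mu" and "moderate_growth mu"
  obtains C where "moderate_weights mu C"
proof -
  interpret increasing_weights mu by fact
  obtain C0 where C0: "\<And>j k. Mseq mu (j + k) \<le> C0 ^ (j + k) * Mseq mu j * Mseq mu k"
    using assms(2) by (auto simp: moderate_growth_def)
  define C where "C = max 1 \<bar>C0\<bar>"
  have "Mseq mu (j + k) \<le> C ^ (j + k) * Mseq mu j * Mseq mu k" for j k
  proof -
    have "C0 ^ (j + k) \<le> \<bar>C0\<bar> ^ (j + k)" by (metis power_abs abs_ge_self)
    also have "\<dots> \<le> C ^ (j + k)" unfolding C_def by (intro power_mono) auto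
    finally have "C0 ^ (j + k) \<le> C ^ (j + k)" .
    then have "C0 ^ (j + k) * (Mseq mu j * Mseq mu k) \<le> C ^ (j + k) * (Mseq mu j * Mseq mu k)"
      using Mseq_pos[of j] Mseq_pos[of k] by (intro mult_right_mono) auto
    then show ?thesis using C0[of j k] by (simp add: mult.assoc)
  qed
  then have "moderate_weights mu C"
    by unfold_locales (auto simp: C_def)
  then show ?thesis by (rule that)
qed

context moderate_weights
begin

lemma Mseq_mult_le: "Mseq mu (i * k) \<le> C ^ (i * k * i) * Mseq mu k ^ i"
proof (induction i)
  case (Suc i)
  have "Mseq mu (Suc i * k) = Mseq mu (i * k + k)" by (simp add: add.commute)
  also have "\<dots> \<le> C ^ (i * k + k) * Mseq mu (i * k) * Mseq mu k" by (rule Mseq_add_le)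
  also have "\<dots> \<le> C ^ (i * k + k) * (C ^ (i * k * i) * Mseq mu k ^ i) * Mseq mu k"
    using Suc C_ge_1 Mseq_pos[of k] by (intro mult_right_mono mult_left_mono) auto
  also have "\<dots> = C ^ (i * k + k + i * k * i) * Mseq mu k ^ Suc i"
    by (simp add: power_add algebra_simps)
  also have "\<dots> \<le> C ^ (Suc i * k * Suc i) * Mseq mu k ^ Suc i"
    using C_ge_1 Mseq_pos[of k] by (intro mult_right_mono power_increasing) (auto simp: algebra_simps)
  finally show ?case .
qed simp

lemma mu_double_le: "mu (2 * k) \<le> C ^ 3 * mu k"
proof (cases "k = 0")
  case True
  then show ?thesis using C_ge_1 by (simp add: mu_0)
next
  case False
  have "Mseq mu (2 * k) * mu (2 * k) ^ k \<le> Mseq mu (2 * k + k)" by (rule Mseq_add_ge_power)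
  also have "\<dots> \<le> C ^ (2 * k + k) * Mseq mu (2 * k) * Mseq mu k" by (rule Mseq_add_le)
  also have "\<dots> \<le> C ^ (2 * k + k) * Mseq mu (2 * k) * mu k ^ k"
    using Mseq_le_mu_power[of k] Mseq_pos[of "2 * k"] C_ge_1 by (intro mult_left_mono) auto
  also have "\<dots> = Mseq mu (2 * k) * (C ^ 3 * mu k) ^ k"
    by (simp add: power_add power_mult_distrib numeral_3_eq_3)
  finally have "Mseq mu (2 * k) * mu (2 * k) ^ k \<le> Mseq mu (2 * k) * (C ^ 3 * mu k) ^ k" .
  then have "mu (2 * k) ^ k \<le> (C ^ 3 * mu k) ^ k"
    using Mseq_pos[of "2 * k"] by simp
  moreover have "0 \<le> mu (2 * k)" "0 \<le> C ^ 3 * mu k"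
    using mu_pos[of "2 * k"] mu_pos[of k] C_ge_1 by auto
  ultimately show ?thesis
    using False power_mono_iff by blast
qed

lemma mu_le_exponential:
  assumes h: "h > 1"
  obtains B where "B \<ge> 1" "\<And>k. mu k \<le> B * h ^ k"
proof -
  obtain K0 where K0: "C ^ 3 < h ^ K0" using real_arch_pow[OF h] by blast
  define K where "K = Suc K0"
  have "h ^ K0 \<le> h ^ K" unfolding K_def using h by (intro power_increasing) auto
  then have K: "C ^ 3 < h ^ K" "K \<ge> 1" using K0 unfolding K_def by auto
  define B where "B = mu (2 * K)"
  have B: "B \<ge> 1" unfolding B_def by (rule mu_ge_1)
  have "mu k \<le> B * h ^ k" for k
  proof (induction k rule: less_induct)
    case (less k)
    show ?case
    proof (cases "k \<le> 2 * K")
      case True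
      have "mu k \<le> B" unfolding B_def using True mono_mu by (simp add: monoD)
      also have "\<dots> \<le> B * h ^ k" using B h by simp
      finally show ?thesis .
    next
      case False
      define m where "m = (k + 1) div 2"
      have m: "m < k" "k \<le> 2 * m" "K + m \<le> k" using False K(2) unfolding m_def by presburger+
      have "mu k \<le> mu (2 * m)" using m mono_mu by (simp add: monoD)
      also have "\<dots> \<le> C ^ 3 * mu m" by (rule mu_double_le)
      also have "\<dots> \<le> h ^ K * (B * h ^ m)"
        using K(1) less[OF m(1)] mu_pos[of m] C_ge_1 h by (intro mult_mono) auto
      also have "\<dots> = B * h ^ (K + m)" by (simp add: power_add)
      also have "\<dots> \<le> B * h ^ k" using m h B by (intro mult_left_mono power_increasing) auto
      finally show ?thesis .
    qed
  qed
  then show ?thesis using B that by blast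
qed

lemma Mseq_mult_ge_power:
  assumes Q: "Q \<ge> 1" and \<delta>: "\<delta> > 1" and k0: "k0 \<ge> 1"
    and ratio: "\<And>k. k \<ge> k0 \<Longrightarrow> \<delta> * mu k \<le> mu (Q * k)"
  obtains \<eta> c where "\<eta> > 1" "c > 0" "\<And>n. c * \<eta> ^ (Q * n) * Mseq mu n ^ Q \<le> Mseq mu (Q * n)"
proof -
  define h where "h = (1 + \<delta>) / 2"
  have h: "h > 1" "h < \<delta>" using \<delta> by (auto simp: h_def)
  obtain B where B: "B \<ge> 1" "\<And>k. mu k \<le> B * h ^ k"
    using mu_le_exponential[OF h(1)] by blast
  define c where "c = 1 / (B ^ Q * \<delta> ^ (Q * k0))"
  have BQ: "B ^ Q * \<delta> ^ (Q * k0) \<ge> 1"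
    using B(1) \<delta> by (intro mult_ge1_I one_le_power) auto
  have "c * (\<delta> / h) ^ (Q * n) * Mseq mu n ^ Q \<le> Mseq mu (Q * n)" for n
  proof (cases n)
    case 0
    then show ?thesis using BQ by (simp add: c_def)
  next
    case (Suc k)
    have "(\<delta> / h) ^ (k + 1) * Mseq mu (k + 1) \<le> (\<delta> / h) ^ (k + 1) * (B * h ^ (k + 1) * Mseq mu k)"
      using B(2)[of "k + 1"] Mseq_pos[of k] \<delta> h by (intro mult_left_mono) (auto simp: Mseq_Suc)
    also have "\<dots> = B * (\<delta> ^ (k + 1) * Mseq mu k)"
      using h by (simp add: power_divide)
    finally have "((\<delta> / h) ^ (k + 1) * Mseq mu (k + 1)) ^ Q \<le> (B * (\<delta> ^ (k + 1) * Mseq mu k)) ^ Q"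
      using \<delta> h Mseq_pos[of "k + 1"] by (intro power_mono) auto
    also have "\<dots> = B ^ Q * (\<delta> ^ (Q * (k + 1)) * Mseq mu k ^ Q)"
      by (simp add: power_mult_distrib power_mult[symmetric] power_add mult.commute)
    also have "\<dots> \<le> B ^ Q * (\<delta> ^ (Q * k0) * Mseq mu (Q * (k + 1)))"
      using Mseq_power_le_Mseq_mult[OF Q _ k0 ratio] \<delta> B by (intro mult_left_mono) auto
    also have "((\<delta> / h) ^ (k + 1) * Mseq mu (k + 1)) ^ Q = (\<delta> / h) ^ (Q * n) * Mseq mu n ^ Q"
      by (simp only: Suc Suc_eq_plus1 power_mult_distrib power_mult[symmetric] mult.commute[of "k + 1" Q])
    finally have "c * ((\<delta> / h) ^ (Q * n) * Mseq mu n ^ Q) \<le> c * ((B ^ Q * \<delta> ^ (Q * k0)) * Mseq mu (Q * n))"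
      using Suc BQ by (intro mult_left_mono) (auto simp: c_def mult.assoc)
    also have "\<dots> = Mseq mu (Q * n)"
      using B(1) \<delta> unfolding c_def by (subst mult.assoc[symmetric]) simp
    finally show ?thesis by (simp only: mult.assoc)
  qed
  then show ?thesis using that[of "\<delta> / h" c] h BQ by (simp add: c_def)
qed

lemma Mseq_mult_ge_geometric:
  assumes Q: "Q \<ge> 1" and lim: "liminf (\<lambda>k. ereal (mu (Q * k) / mu k)) > 1" and \<rho>: "\<rho> > 0"
  obtains r c where "r > 0" "c > 0" "\<And>k. c * (\<rho> ^ k * Mseq mu k) ^ r \<le> Mseq mu (r * k)"
proof -
  obtain \<delta> k0 where \<delta>: "\<delta> > 1" "k0 \<ge> 1" "\<And>k. k \<ge> k0 \<Longrightarrow> \<delta> * mu k \<le> mu (Q * k)"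
    using liminf_mu_ratio_gt_1E[OF lim] by blast
  obtain \<eta> c where \<eta>: "\<eta> > 1" "c > 0" "\<And>n. c * \<eta> ^ (Q * n) * Mseq mu n ^ Q \<le> Mseq mu (Q * n)"
    using Mseq_mult_ge_power[OF Q \<delta>] by blast
  obtain j where j: "\<rho> < \<eta> ^ j" using real_arch_pow[OF \<eta>(1)] by blast
  obtain c' where c': "c' > 0" "\<And>n. c' * (\<eta> ^ j) ^ (Q ^ j * n) * Mseq mu n ^ Q ^ j \<le> Mseq mu (Q ^ j * n)"
    using power_growth_iterate[of "Mseq mu" \<eta> c Q j] Mseq_pos \<eta> by auto
  have "c' * (\<rho> ^ k * Mseq mu k) ^ Q ^ j \<le> Mseq mu (Q ^ j * k)" for k
  proof -
    have "c' * (\<rho> ^ k * Mseq mu k) ^ Q ^ j = c' * \<rho> ^ (Q ^ j * k) * Mseq mu k ^ Q ^ j"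
      by (simp add: power_mult_distrib power_mult[symmetric] mult.commute)
    also have "\<dots> \<le> c' * (\<eta> ^ j) ^ (Q ^ j * k) * Mseq mu k ^ Q ^ j"
      using c'(1) \<rho> j Mseq_pos[of k] by (intro mult_left_mono mult_right_mono power_mono) auto
    also have "\<dots> \<le> Mseq mu (Q ^ j * k)" by (rule c'(2))
    finally show ?thesis .
  qed
  then show ?thesis using that[of "Q ^ j" c'] Q c'(1) by simp
qed

end

locale moderate_weight_seq = weight_seq + moderate_weights
begin

lemma Wseq_omegaM_le_geometric:
  assumes x: "x > 0"
  obtains h where "h > 0" "\<And>k. Wseq (omegaM mu) x k \<le> h ^ k * Mseq mu k"
proof -
  define r where "r = nat \<lceil>x\<rceil>"
  have r: "x \<le> real r" "r > 0" using x unfolding r_def by linarith+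
  have "Wseq (omegaM mu) x k \<le> (C ^ r) ^ k * Mseq mu k" for k
  proof -
    have "Wseq (omegaM mu) (real r) k ^ r = Mseq mu (r * k)"
      by (rule Wseq_omegaM_nat_power[OF r(2)])
    also have "\<dots> \<le> C ^ (r * k * r) * Mseq mu k ^ r" by (rule Mseq_mult_le)
    also have "\<dots> = ((C ^ r) ^ k * Mseq mu k) ^ r"
      by (simp add: power_mult_distrib power_mult[symmetric] mult.commute)
    finally have "Wseq (omegaM mu) (real r) k \<le> (C ^ r) ^ k * Mseq mu k"
      using r(2) C_ge_1 Mseq_pos[of k] power_mono_iff[of "Wseq (omegaM mu) (real r) k"]
      by (simp add: Wseq_def)
    with Wseq_omegaM_le[OF x r(1)] show ?thesis by (rule order_trans)
  qed
  then show ?thesis using that[of "C ^ r"] C_ge_1 by simp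
qed

lemma geometric_le_Wseq_omegaM:
  assumes "Q \<ge> 1" "liminf (\<lambda>k. ereal (mu (Q * k) / mu k)) > 1" "\<rho> > 0"
  obtains r :: nat and D where "r > 0" "\<And>k. \<rho> ^ k * Mseq mu k \<le> D * Wseq (omegaM mu) (real r) k"
proof -
  obtain r c where r: "r > 0" "c > 0" "\<And>k. c * (\<rho> ^ k * Mseq mu k) ^ r \<le> Mseq mu (r * k)"
    using Mseq_mult_ge_geometric[OF assms] by blast
  define D where "D = max 1 (1 / c)"
  have "\<rho> ^ k * Mseq mu k \<le> D * Wseq (omegaM mu) (real r) k" for k
  proof -
    have "(\<rho> ^ k * Mseq mu k) ^ r \<le> Mseq mu (r * k) / c"
      using r by (simp add: pos_le_divide_eq mult.commute)
    also have "\<dots> = 1 / c * Wseq (omegaM mu) (real r) k ^ r"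
      by (simp add: Wseq_omegaM_nat_power[OF r(1)])
    also have "\<dots> \<le> D ^ r * Wseq (omegaM mu) (real r) k ^ r"
    proof (intro mult_right_mono)
      have "D \<le> D ^ r" using power_increasing[of 1 r D] r(1) by (simp add: D_def)
      then show "1 / c \<le> D ^ r" by (simp add: D_def)
    qed (simp add: Wseq_def)
    finally have "(\<rho> ^ k * Mseq mu k) ^ r \<le> (D * Wseq (omegaM mu) (real r) k) ^ r"
      by (simp add: power_mult_distrib)
    then show ?thesis
      using r(1) assms(3) Mseq_pos[of k] power_mono_iff[of "\<rho> ^ k * Mseq mu k"]
      by (simp add: D_def Wseq_def)
  qed
  then show ?thesis using that r(1) by blast
qed

end

section \<open>The ultradifferentiable classes\<close>

definition smooth_bounded_by :: "(nat \<Rightarrow> real) \<Rightarrow> (real ^ 'n::finite \<Rightarrow> real) set" where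
  "smooth_bounded_by w = {f. smooth f \<and> (\<exists>C. \<forall>x \<alpha>. \<bar>dmulti \<alpha> f x\<bar> \<le> C * w (mlen \<alpha>))}"

lemma BM_Rn_eq_UN: "BM_Rn M = (\<Union>\<rho>\<in>{0<..}. smooth_bounded_by (\<lambda>k. \<rho> ^ k * M k))"
  unfolding BM_Rn_def smooth_bounded_by_def by (auto simp: mult.assoc)

lemma Bomega_Rn_eq_UN: "Bomega_Rn \<omega> = (\<Union>r\<in>{0<..}. smooth_bounded_by (Wseq \<omega> (real r)))"
  unfolding Bomega_Rn_def smooth_bounded_by_def Wseq_def by auto

lemma smooth_bounded_by_mono:
  assumes "\<And>k. 0 \<le> A k" and "\<And>k. A k \<le> D * B k"
  shows "smooth_bounded_by A \<subseteq> smooth_bounded_by B"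
proof
  fix f :: "real ^ 'n \<Rightarrow> real"
  assume "f \<in> smooth_bounded_by A"
  then obtain C where f: "smooth f" "\<And>x \<alpha>. \<bar>dmulti \<alpha> f x\<bar> \<le> C * A (mlen \<alpha>)"
    unfolding smooth_bounded_by_def by blast
  have "\<bar>dmulti \<alpha> f x\<bar> \<le> (\<bar>C\<bar> * D) * B (mlen \<alpha>)" for x \<alpha>
  proof -
    have "\<bar>dmulti \<alpha> f x\<bar> \<le> \<bar>C\<bar> * A (mlen \<alpha>)"
      using f(2)[of \<alpha> x] assms(1)[of "mlen \<alpha>"] by (meson abs_ge_self mult_right_mono order_trans)
    also have "\<dots> \<le> \<bar>C\<bar> * (D * B (mlen \<alpha>))" by (intro mult_left_mono assms(2)) simp
    finally show ?thesis by (simp add: mult.assoc)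
  qed
  then show "f \<in> smooth_bounded_by B"
    unfolding smooth_bounded_by_def using f(1) by blast
qed

lemma BM_E_mono:
  assumes h: "h > 0" and AB: "\<And>k. A k \<le> h ^ k * B k"
  shows "BM_E A E \<subseteq> BM_E B E"
proof
  fix F assume "F \<in> BM_E A E"
  then obtain C \<rho> where cont: "\<forall>\<alpha>. continuous_on E (F \<alpha>)" and C: "C > 0" and \<rho>: "\<rho> > 0"
    and bound: "\<forall>\<alpha>. \<forall>a\<in>E. \<bar>F \<alpha> a\<bar> \<le> C * \<rho> ^ mlen \<alpha> * A (mlen \<alpha>)"
    and remainder: "\<forall>\<alpha> p. \<forall>a\<in>E. \<forall>b\<in>E. p \<ge> mlen \<alpha> \<longrightarrow>
           \<bar>jet_rem F p a \<alpha> b\<bar> \<le> C * \<rho> ^ (p + 1) * A (p + 1)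
              * norm (b - a) ^ (p + 1 - mlen \<alpha>) / fact (p + 1 - mlen \<alpha>)"
    unfolding BM_E_def by blast
  have weight: "C * \<rho> ^ n * A n \<le> C * (\<rho> * h) ^ n * B n" for n
    using AB[of n] C \<rho> by (simp add: power_mult_distrib mult.assoc mult_left_mono)
  have "\<forall>\<alpha>. \<forall>a\<in>E. \<bar>F \<alpha> a\<bar> \<le> C * (\<rho> * h) ^ mlen \<alpha> * B (mlen \<alpha>)"
    using bound weight order_trans by blast
  moreover have "\<forall>\<alpha> p. \<forall>a\<in>E. \<forall>b\<in>E. p \<ge> mlen \<alpha> \<longrightarrow>
           \<bar>jet_rem F p a \<alpha> b\<bar> \<le> C * (\<rho> * h) ^ (p + 1) * B (p + 1)
              * norm (b - a) ^ (p + 1 - mlen \<alpha>) / fact (p + 1 - mlen \<alpha>)"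
  proof (intro allI ballI impI)
    fix \<alpha> :: "'a mindex" and p a b
    assume "a \<in> E" "b \<in> E" "p \<ge> mlen \<alpha>"
    then have "\<bar>jet_rem F p a \<alpha> b\<bar> \<le> C * \<rho> ^ (p + 1) * A (p + 1)
              * (norm (b - a) ^ (p + 1 - mlen \<alpha>) / fact (p + 1 - mlen \<alpha>))"
      using remainder by auto
    also have "\<dots> \<le> C * (\<rho> * h) ^ (p + 1) * B (p + 1)
              * (norm (b - a) ^ (p + 1 - mlen \<alpha>) / fact (p + 1 - mlen \<alpha>))"
      by (intro mult_right_mono weight) simp
    finally show "\<bar>jet_rem F p a \<alpha> b\<bar> \<le> C * (\<rho> * h) ^ (p + 1) * B (p + 1)
              * norm (b - a) ^ (p + 1 - mlen \<alpha>) / fact (p + 1 - mlen \<alpha>)"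
      by simp
  qed
  ultimately show "F \<in> BM_E B E"
    unfolding BM_E_def using cont C \<rho> h by (intro CollectI conjI exI[of _ C] exI[of _ "\<rho> * h"]) auto
qed

context moderate_weight_seq
begin

lemma BM_E_eq_Bomega_E: "BM_E (Mseq mu) E = Bomega_E (omegaM mu) E"
proof
  have "BM_E (Wseq (omegaM mu) 1) E \<subseteq> Bomega_E (omegaM mu) E"
    unfolding Bomega_E_def by (rule UN_upper) simp
  then show "BM_E (Mseq mu) E \<subseteq> Bomega_E (omegaM mu) E"
    by (simp add: Wseq_omegaM_one)
  show "Bomega_E (omegaM mu) E \<subseteq> BM_E (Mseq mu) E"
    unfolding Bomega_E_def
  proof (rule UN_least)
    fix x :: real assume "x \<in> {0<..}"
    then obtain h where "h > 0" "\<And>k. Wseq (omegaM mu) x k \<le> h ^ k * Mseq mu k"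
      using Wseq_omegaM_le_geometric by auto
    then show "BM_E (Wseq (omegaM mu) x) E \<subseteq> BM_E (Mseq mu) E" by (rule BM_E_mono)
  qed
qed

lemma BM_Rn_eq_Bomega_Rn:
  assumes "Q \<ge> 1" "liminf (\<lambda>k. ereal (mu (Q * k) / mu k)) > 1"
  shows "BM_Rn (Mseq mu) = Bomega_Rn (omegaM mu)"
  unfolding BM_Rn_eq_UN Bomega_Rn_eq_UN
proof (intro equalityI UN_least)
  fix \<rho> :: real assume "\<rho> \<in> {0<..}"
  then obtain r :: nat and D where "r > 0" and D: "\<And>k. \<rho> ^ k * Mseq mu k \<le> D * Wseq (omegaM mu) (real r) k"
    using geometric_le_Wseq_omegaM[OF assms] by auto
  have "0 \<le> \<rho> ^ k * Mseq mu k" for k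
    using \<open>\<rho> \<in> {0<..}\<close> Mseq_pos[of k] by simp
  then have "smooth_bounded_by (\<lambda>k. \<rho> ^ k * Mseq mu k)
      \<subseteq> (smooth_bounded_by (Wseq (omegaM mu) (real r)) :: (real ^ 'n \<Rightarrow> real) set)"
    using D by (rule smooth_bounded_by_mono)
  also have "\<dots> \<subseteq> (\<Union>r\<in>{0<..}. smooth_bounded_by (Wseq (omegaM mu) (real r)))"
    using \<open>r > 0\<close> by (intro UN_upper) simp
  finally show "smooth_bounded_by (\<lambda>k. \<rho> ^ k * Mseq mu k)
      \<subseteq> (\<Union>r\<in>{0<..}. smooth_bounded_by (Wseq (omegaM mu) (real r)) :: (real ^ 'n \<Rightarrow> real) set)" .
next
  fix r :: nat assume "r \<in> {0<..}"
  then obtain h where "h > 0" "\<And>k. Wseq (omegaM mu) (real r) k \<le> h ^ k * Mseq mu k"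
    using Wseq_omegaM_le_geometric[of "real r"] by auto
  moreover have "0 \<le> Wseq (omegaM mu) (real r) k" for k
    by (simp add: Wseq_def)
  ultimately have "smooth_bounded_by (Wseq (omegaM mu) (real r))
      \<subseteq> (smooth_bounded_by (\<lambda>k. h ^ k * Mseq mu k) :: (real ^ 'n \<Rightarrow> real) set)"
    by (intro smooth_bounded_by_mono[where D = 1]) auto
  also have "\<dots> \<subseteq> (\<Union>\<rho>\<in>{0<..}. smooth_bounded_by (\<lambda>k. \<rho> ^ k * Mseq mu k))"
    using \<open>h > 0\<close> by (intro UN_upper) simp
  finally show "smooth_bounded_by (Wseq (omegaM mu) (real r))
      \<subseteq> (\<Union>\<rho>\<in>{0<..}. smooth_bounded_by (\<lambda>k. \<rho> ^ k * Mseq mu k) :: (real ^ 'n \<Rightarrow> real) set)" .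
qed

end

theorem lemma5p8:
  fixes mu :: "nat \<Rightarrow> real"
  assumes "weight_sequence mu"
    and "moderate_growth mu"
    and "liminf (\<lambda>k. ereal (root k (mseq mu k))) > 0"
    and "\<exists>Q::nat. Q \<ge> 2 \<and> liminf (\<lambda>k. ereal (mu (Q * k) / mu k)) > 1"
  shows "(BM_Rn (Mseq mu) :: (real ^ 'n::finite \<Rightarrow> real) set) = Bomega_Rn (omegaM mu)
     \<and> (\<forall>E :: (real ^ 'n) set. compact E \<longrightarrow> BM_E (Mseq mu) E = Bomega_E (omegaM mu) E)"
proof -
  interpret weight_seq mu using assms(1) by (rule weight_seqI)
  obtain C where "moderate_weights mu C"
    using moderate_weightsE[OF increasing_weights_axioms assms(2)] .
  then interpret moderate_weight_seq mu C
    by (intro moderate_weight_seq.intro weight_seq_axioms)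
  obtain Q :: nat where "Q \<ge> 2" and Q: "liminf (\<lambda>k. ereal (mu (Q * k) / mu k)) > 1"
    using assms(4) by blast
  then have "Q \<ge> 1" by simp
  with Q show ?thesis
    using BM_Rn_eq_Bomega_Rn BM_E_eq_Bomega_E by blast
qed

end
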